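(* For every $d\ge 1$, every hierarchical hub labeling of the $d$-dimensional hypercube $Q_d$ has size at least $3^d$. Consequently, the minimum size of a hierarchical hub labeling of $Q_d$ is exactly $3^d$. *)

theory Defs
  imports Main
begin

text \<open>A walk from u to v is a nonempty list of vertices of V starting at u,
  ending at v, with consecutive entries adjacent; its length (number of edges)
  is length p - 1. A shortest path is a walk of minimal length.\<close>

definition is_walk :: "'a set \<Rightarrow> ('a \<Rightarrow> 'a \<Rightarrow> bool) \<Rightarrow> 'a list \<Rightarrow> 'a \<Rightarrow> 'a \<Rightarrow> bool" where
  "is_walk V E p u v \<longleftrightarrow> p \<noteq> [] \<and> hd p = u \<and> last p = v \<and> set p \<subseteq> V \<and>
     (\<forall>i < length p - 1. E (p ! i) (p ! Suc i))"

definition is_shortest_path :: "'a set \<Rightarrow> ('a \<Rightarrow> 'a \<Rightarrow> bool) \<Rightarrow> 'a list \<Rightarrow> 'a \<Rightarrow> 'a \<Rightarrow> bool" where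
  "is_shortest_path V E p u v \<longleftrightarrow> is_walk V E p u v \<and>
     (\<forall>q. is_walk V E q u v \<longrightarrow> length p \<le> length q)"

definition is_hub_labeling :: "'a set \<Rightarrow> ('a \<Rightarrow> 'a \<Rightarrow> bool) \<Rightarrow> ('a \<Rightarrow> 'a set) \<Rightarrow> bool" where
  "is_hub_labeling V E H \<longleftrightarrow> (\<forall>v\<in>V. H v \<subseteq> V) \<and>
     (\<forall>u\<in>V. \<forall>v\<in>V. \<exists>w \<in> H u \<inter> H v. \<exists>p. is_shortest_path V E p u v \<and> w \<in> set p)"

text \<open>Hierarchical: there is a total order (ranking, an injective map into nat)
  of the vertices such that every hub of v ranks at least as high as v.\<close>

definition is_hierarchical_hub_labeling :: "'a set \<Rightarrow> ('a \<Rightarrow> 'a \<Rightarrow> bool) \<Rightarrow> ('a \<Rightarrow> 'a set) \<Rightarrow> bool" where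
  "is_hierarchical_hub_labeling V E H \<longleftrightarrow> is_hub_labeling V E H \<and>
     (\<exists>r :: 'a \<Rightarrow> nat. inj_on r V \<and> (\<forall>v\<in>V. \<forall>w\<in>H v. r v \<le> r w))"

definition labeling_size :: "'a set \<Rightarrow> ('a \<Rightarrow> 'a set) \<Rightarrow> nat" where
  "labeling_size V H = (\<Sum>v\<in>V. card (H v))"

definition hypercube_V :: "nat \<Rightarrow> bool list set" where
  "hypercube_V d = {xs. length xs = d}"

definition hypercube_E :: "bool list \<Rightarrow> bool list \<Rightarrow> bool" where
  "hypercube_E xs ys \<longleftrightarrow> length xs = length ys \<and>
     card {i. i < length xs \<and> xs ! i \<noteq> ys ! i} = 1"

end

theory Submission
  imports Defs
begin

text \<open>A pattern in \<open>{0, 1, *}\<^sup>d\<close> describes a subcube of \<open>Q\<^sub>d\<close>, and all shortest paths between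
  two vertices stay inside the subcube they span. Given a hierarchical labeling with ranking r,
  let m be the top-ranked vertex of the subcube of a pattern P and v its antipode there. The
  common hub of v and m lies on a shortest v-m path, hence in the subcube, hence ranks no
  higher than m; being a hub of m it is m itself. So m is a hub of v, and the pair (v, m)
  spans P: distinct patterns yield distinct entries of the labeling, giving at least \<open>3\<^sup>d\<close>.
  Conversely, making w a hub of v exactly when w is top-ranked in the subcube spanned by v
  and w is a hierarchical hub labeling whose entries (v, w) are determined by their spanning
  pattern, so it has at most \<open>3\<^sup>d\<close> entries.\<close>

lemma is_walk_Cons_iff:
  "is_walk V E (x # p) a b \<longleftrightarrow> x = a \<and> a \<in> V \<and>
     (if p = [] then a = b else E a (hd p) \<and> is_walk V E p (hd p) b)"
proof (cases p)
  case (Cons y q)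
  have "(\<forall>i < Suc (length q). E ((x # y # q) ! i) ((x # y # q) ! Suc i)) \<longleftrightarrow>
        E x y \<and> (\<forall>i < length q. E ((y # q) ! i) ((y # q) ! Suc i))"
    by (auto simp: less_Suc_eq_0_disj)
  with Cons show ?thesis by (auto simp: is_walk_def)
qed (auto simp: is_walk_def)

lemma is_walk_append:
  "is_walk V E p a b \<Longrightarrow> is_walk V E q b c \<Longrightarrow> is_walk V E (p @ tl q) a c"
proof (induction p arbitrary: a)
  case Nil
  then show ?case by (simp add: is_walk_def)
next
  case (Cons x p)
  show ?case
  proof (cases "p = []")
    case True
    with Cons.prems have "(x # p) @ tl q = q" "a = b"
      by (auto simp: is_walk_Cons_iff is_walk_def)
    with Cons.prems(2) show ?thesis by simp
  next
    case False
    with Cons show ?thesis by (auto simp: is_walk_Cons_iff)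
  qed
qed

lemma ex_max_rank:
  fixes r :: "'a \<Rightarrow> 'b :: linorder"
  assumes "finite S" "S \<noteq> {}"
  obtains m where "m \<in> S" "\<And>x. x \<in> S \<Longrightarrow> r x \<le> r m"
  using Max_in[of "r ` S"] Max_ge[of "r ` S"] assms by fastforce

lemma labeling_size_eq_card_Sigma:
  "finite V \<Longrightarrow> \<forall>v\<in>V. H v \<subseteq> V \<Longrightarrow> labeling_size V H = card (Sigma V H)"
  unfolding labeling_size_def by (subst card_SigmaI) (auto intro: finite_subset)

lemma finite_hub_labeling_sizes:
  assumes "finite V"
  shows "finite {labeling_size V H | H. is_hub_labeling V E H}"
proof -
  have bound: "labeling_size V H \<le> card V * card V" if "is_hub_labeling V E H" for H
  proof -
    have "\<forall>v\<in>V. H v \<subseteq> V" using that by (simp add: is_hub_labeling_def)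
    then have "(\<Sum>v\<in>V. card (H v)) \<le> (\<Sum>v\<in>V. card V)"
      by (intro sum_mono) (simp add: card_mono assms)
    then show ?thesis by (simp add: labeling_size_def)
  qed
  have "{labeling_size V H | H. is_hub_labeling V E H} \<subseteq> {..card V * card V}"
  proof
    fix s assume "s \<in> {labeling_size V H | H. is_hub_labeling V E H}"
    then obtain H where "s = labeling_size V H" "is_hub_labeling V E H" by blast
    then show "s \<in> {..card V * card V}" using bound by simp
  qed
  then show ?thesis by (rule finite_subset) simp
qed

definition hamming_dist :: "nat \<Rightarrow> bool list \<Rightarrow> bool list \<Rightarrow> nat" where
  "hamming_dist d a b = card {i. i < d \<and> a ! i \<noteq> b ! i}"

lemma hamming_dist_self [simp]: "hamming_dist d a a = 0"
  by (simp add: hamming_dist_def)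

lemma hamming_dist_eq_0_iff:
  "a \<in> hypercube_V d \<Longrightarrow> b \<in> hypercube_V d \<Longrightarrow> hamming_dist d a b = 0 \<longleftrightarrow> a = b"
  by (auto simp: hamming_dist_def hypercube_V_def intro: nth_equalityI)

text \<open>Over a two-letter alphabet, x disagrees with both a and b exactly where a and b agree
  but x does not.\<close>

lemma hamming_dist_detour:
  "hamming_dist d a x + hamming_dist d x b =
     hamming_dist d a b + 2 * card {i. i < d \<and> a ! i = b ! i \<and> x ! i \<noteq> a ! i}"
proof -
  let ?D = "\<lambda>u v. {i. i < d \<and> u ! i \<noteq> v ! i}"
  let ?I = "{i. i < d \<and> a ! i = b ! i \<and> x ! i \<noteq> a ! i}"
  have "?D a x \<union> ?D x b = ?D a b \<union> ?I" "?D a b \<inter> ?I = {}" "?D a x \<inter> ?D x b = ?I"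
    by auto
  then have "card (?D a x) + card (?D x b) = card (?D a b) + card ?I + card ?I"
    using card_Un_Int[of "?D a x" "?D x b"] card_Un_disjoint[of "?D a b" ?I] by simp
  then show ?thesis by (simp add: hamming_dist_def)
qed

lemma hamming_dist_triangle: "hamming_dist d a b \<le> hamming_dist d a x + hamming_dist d x b"
  by (simp add: hamming_dist_detour)

lemma hypercube_E_iff:
  "a \<in> hypercube_V d \<Longrightarrow> hypercube_E a b \<longleftrightarrow> b \<in> hypercube_V d \<and> hamming_dist d a b = 1"
  by (auto simp: hypercube_E_def hypercube_V_def hamming_dist_def)

lemma finite_hypercube_V: "finite (hypercube_V d)"
  using finite_lists_length_eq[of "UNIV :: bool set" d] by (simp add: hypercube_V_def)

lemma hypercube_walk_length:
  assumes "is_walk (hypercube_V d) hypercube_E p a b" "x \<in> set p"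
  shows "hamming_dist d a x + hamming_dist d x b < length p"
  using assms
proof (induction p arbitrary: a x)
  case Nil
  then show ?case by simp
next
  case (Cons y p)
  show ?case
  proof (cases "p = []")
    case True
    with Cons.prems show ?thesis by (simp add: is_walk_Cons_iff)
  next
    case False
    with Cons.prems(1) have a: "y = a" "a \<in> hypercube_V d" "hypercube_E a (hd p)"
      and walk: "is_walk (hypercube_V d) hypercube_E p (hd p) b"
      by (simp_all add: is_walk_Cons_iff)
    have step: "hamming_dist d a z \<le> 1 + hamming_dist d (hd p) z" for z
      using hamming_dist_triangle[of d a z "hd p"] hypercube_E_iff[OF a(2)] a(3) by simp
    show ?thesis
    proof (cases "x = a")
      case True
      have "hamming_dist d (hd p) (hd p) + hamming_dist d (hd p) b < length p"
        using Cons.IH[OF walk hd_in_set[OF \<open>p \<noteq> []\<close>]] .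
      with step[of b] True show ?thesis by simp
    next
      case False
      with Cons.prems(2) a(1) have "hamming_dist d (hd p) x + hamming_dist d x b < length p"
        using Cons.IH[OF walk] by simp
      with step[of x] show ?thesis by simp
    qed
  qed
qed

text \<open>A pattern fixes coordinate i to a if its i-th entry is Some a, and leaves it free
  (the paper's *) if it is None.\<close>

definition spanning_pattern :: "bool list \<Rightarrow> bool list \<Rightarrow> bool option list" where
  "spanning_pattern u v = map2 (\<lambda>a b. if a = b then Some a else None) u v"

definition subcube :: "bool option list \<Rightarrow> bool list set" where
  "subcube P = {x. list_all2 (\<lambda>c a. c \<in> {None, Some a}) P x}"

definition subcube_antipode :: "bool option list \<Rightarrow> bool list \<Rightarrow> bool list" where
  "subcube_antipode P m = map2 (\<lambda>c a. case c of Some b \<Rightarrow> b | None \<Rightarrow> \<not> a) P m"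

lemma nth_spanning_pattern:
  "i < length v \<Longrightarrow> i < length w \<Longrightarrow>
   spanning_pattern v w ! i = (if v ! i = w ! i then Some (v ! i) else None)"
  by (simp add: spanning_pattern_def)

lemma mem_subcube_spanning_pattern:
  assumes "u \<in> hypercube_V d" "v \<in> hypercube_V d"
  shows "x \<in> subcube (spanning_pattern u v) \<longleftrightarrow>
         x \<in> hypercube_V d \<and> (\<forall>i < d. u ! i = v ! i \<longrightarrow> x ! i = u ! i)"
  using assms by (auto simp: subcube_def spanning_pattern_def hypercube_V_def list_all2_conv_all_nth)

lemma mem_subcube_spanning_pattern_iff_hamming:
  assumes "u \<in> hypercube_V d" "v \<in> hypercube_V d" "x \<in> hypercube_V d"
  shows "x \<in> subcube (spanning_pattern u v) \<longleftrightarrow>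
         hamming_dist d u x + hamming_dist d x v = hamming_dist d u v"
proof -
  have "finite {i. i < d \<and> u ! i = v ! i \<and> x ! i \<noteq> u ! i}" by simp
  then show ?thesis
    using assms by (auto simp: hamming_dist_detour mem_subcube_spanning_pattern)
qed

lemma hypercube_geodesic_exists:
  assumes "a \<in> hypercube_V d" "b \<in> hypercube_V d"
  shows "\<exists>p. is_walk (hypercube_V d) hypercube_E p a b \<and> length p = hamming_dist d a b + 1"
  using assms
proof (induction "hamming_dist d a b" arbitrary: a)
  case 0
  then have "a = b" using hamming_dist_eq_0_iff by metis
  with 0 show ?case by (intro exI[of _ "[a]"]) (simp add: is_walk_def)
next
  case (Suc n)
  then have "a \<noteq> b" by (metis hamming_dist_self nat.distinct(1))
  with Suc.prems obtain i where i: "i < d" "a ! i \<noteq> b ! i"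
    by (auto simp: hypercube_V_def list_eq_iff_nth_eq)
  define a' where "a' = a[i := b ! i]"
  have a': "a' \<in> hypercube_V d" using Suc.prems(1) by (simp add: a'_def hypercube_V_def)
  have "{j. j < d \<and> a ! j \<noteq> a' ! j} = {i}"
    using i Suc.prems(1) by (auto simp: a'_def hypercube_V_def nth_list_update)
  then have edge: "hypercube_E a a'"
    using a' Suc.prems(1) by (simp add: hypercube_E_iff hamming_dist_def)
  have "a' \<in> subcube (spanning_pattern a b)"
    using a' i Suc.prems
    by (auto simp: mem_subcube_spanning_pattern a'_def hypercube_V_def nth_list_update)
  then have "hamming_dist d a' b = n"
    using Suc.hyps(2) edge a' Suc.prems
    by (simp add: mem_subcube_spanning_pattern_iff_hamming hypercube_E_iff)
  then obtain q where q: "is_walk (hypercube_V d) hypercube_E q a' b" "length q = n + 1"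
    using Suc.hyps(1) a' Suc.prems(2) by metis
  moreover from q(1) have "q \<noteq> []" "hd q = a'" by (simp_all add: is_walk_def)
  ultimately show ?case
    using edge Suc.prems(1) Suc.hyps(2) by (intro exI[of _ "a # q"]) (simp add: is_walk_Cons_iff)
qed

lemma is_shortest_path_hypercube_iff:
  assumes "a \<in> hypercube_V d" "b \<in> hypercube_V d"
  shows "is_shortest_path (hypercube_V d) hypercube_E p a b \<longleftrightarrow>
         is_walk (hypercube_V d) hypercube_E p a b \<and> length p = hamming_dist d a b + 1"
proof -
  have long: "hamming_dist d a b < length q" if "is_walk (hypercube_V d) hypercube_E q a b" for q
    using hypercube_walk_length[OF that, of a] that
    by (metis add_0 hamming_dist_self hd_in_set is_walk_def)
  obtain q where "is_walk (hypercube_V d) hypercube_E q a b" "length q = hamming_dist d a b + 1"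
    using hypercube_geodesic_exists[OF assms] by blast
  then show ?thesis
    unfolding is_shortest_path_def by (metis Suc_eq_plus1 Suc_leI le_antisym long)
qed

lemma shortest_path_subset_subcube:
  assumes "is_shortest_path (hypercube_V d) hypercube_E p u v"
  shows "set p \<subseteq> subcube (spanning_pattern u v)"
proof
  fix x assume x: "x \<in> set p"
  have walk: "is_walk (hypercube_V d) hypercube_E p u v"
    using assms by (simp add: is_shortest_path_def)
  then have uvx: "u \<in> hypercube_V d" "v \<in> hypercube_V d" "x \<in> hypercube_V d"
    using x by (auto simp: is_walk_def)
  have "hamming_dist d u x + hamming_dist d x v < hamming_dist d u v + 1"
    using hypercube_walk_length[OF walk x] assms by (simp add: is_shortest_path_hypercube_iff uvx)
  then show "x \<in> subcube (spanning_pattern u v)"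
    using hamming_dist_triangle[of d u v x] mem_subcube_spanning_pattern_iff_hamming[OF uvx]
    by simp
qed

lemma ex_shortest_path_through:
  assumes "u \<in> hypercube_V d" "v \<in> hypercube_V d" "x \<in> subcube (spanning_pattern u v)"
  shows "\<exists>p. is_shortest_path (hypercube_V d) hypercube_E p u v \<and> x \<in> set p"
proof -
  have x: "x \<in> hypercube_V d" using assms by (simp add: mem_subcube_spanning_pattern)
  obtain p where p: "is_walk (hypercube_V d) hypercube_E p u x" "length p = hamming_dist d u x + 1"
    using hypercube_geodesic_exists[OF assms(1) x] by blast
  obtain q where q: "is_walk (hypercube_V d) hypercube_E q x v" "length q = hamming_dist d x v + 1"
    using hypercube_geodesic_exists[OF x assms(2)] by blast
  have "length (p @ tl q) = hamming_dist d u v + 1"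
    using p(2) q(2) assms x by (simp add: mem_subcube_spanning_pattern_iff_hamming[symmetric])
  moreover have "x \<in> set (p @ tl q)"
    using p(1) by (auto simp: is_walk_def)
  ultimately show ?thesis
    using is_walk_append[OF p(1) q(1)] assms(1,2) by (auto simp: is_shortest_path_hypercube_iff)
qed

lemma spanning_pattern_eq_iff:
  assumes "length v = length w"
  shows "spanning_pattern v w = P \<longleftrightarrow> w \<in> subcube P \<and> v = subcube_antipode P w"
proof -
  have pointwise: "(if a = b then Some a else None) = c \<longleftrightarrow>
      c \<in> {None, Some b} \<and> a = (case c of Some x \<Rightarrow> x | None \<Rightarrow> \<not> b)" for a b :: bool and c
    by (cases c) auto
  have "spanning_pattern v w = P \<longleftrightarrow> length P = length w \<and>
      (\<forall>i < length w. (if v ! i = w ! i then Some (v ! i) else None) = P ! i)"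
    using assms by (auto simp: list_eq_iff_nth_eq nth_spanning_pattern spanning_pattern_def)
  also have "\<dots> \<longleftrightarrow> length P = length w \<and> (\<forall>i < length w. P ! i \<in> {None, Some (w ! i)} \<and>
      v ! i = (case P ! i of Some x \<Rightarrow> x | None \<Rightarrow> \<not> w ! i))"
    by (simp only: pointwise)
  also have "\<dots> \<longleftrightarrow> w \<in> subcube P \<and> v = subcube_antipode P w"
    using assms by (auto simp: subcube_def subcube_antipode_def list_all2_conv_all_nth
        list_eq_iff_nth_eq)
  finally show ?thesis .
qed

lemma spanning_pattern_commute: "spanning_pattern u v = spanning_pattern v u"
  by (auto simp: spanning_pattern_def list_eq_iff_nth_eq)

lemma subcube_spanning_pattern_mono:
  assumes "u \<in> hypercube_V d" "v \<in> hypercube_V d" "w \<in> subcube (spanning_pattern u v)"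
  shows "subcube (spanning_pattern u w) \<subseteq> subcube (spanning_pattern u v)"
proof -
  have "w \<in> hypercube_V d" "\<forall>i < d. u ! i = v ! i \<longrightarrow> w ! i = u ! i"
    using assms by (simp_all add: mem_subcube_spanning_pattern)
  then show ?thesis
    using assms(1,2) by (auto simp: mem_subcube_spanning_pattern)
qed

lemma subcube_subset_hypercube_V: "length P = d \<Longrightarrow> subcube P \<subseteq> hypercube_V d"
  by (auto simp: subcube_def hypercube_V_def dest: list_all2_lengthD)

lemma subcube_nonempty: "subcube P \<noteq> {}"
proof -
  have "map (case_option False id) P \<in> subcube P"
    by (auto simp: subcube_def list_all2_conv_all_nth split: option.splits)
  then show ?thesis by blast
qed

lemma card_patterns: "card {P :: bool option list. length P = d} = 3 ^ d"
proof -
  have "card (UNIV :: bool option set) = 3"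
    by (simp add: UNIV_option_conv card_image)
  then show ?thesis
    using card_lists_length_eq[of "UNIV :: bool option set" d] by simp
qed

lemma hierarchical_hub_labeling_realizes_pattern:
  assumes "is_hierarchical_hub_labeling (hypercube_V d) hypercube_E H" "length P = d"
  shows "P \<in> (\<lambda>(v, w). spanning_pattern v w) ` Sigma (hypercube_V d) H"
proof -
  let ?V = "hypercube_V d"
  obtain r :: "bool list \<Rightarrow> nat"
    where r: "inj_on r ?V" "\<And>v w. v \<in> ?V \<Longrightarrow> w \<in> H v \<Longrightarrow> r v \<le> r w"
    using assms(1) unfolding is_hierarchical_hub_labeling_def by blast
  have cover: "\<And>u v. u \<in> ?V \<Longrightarrow> v \<in> ?V \<Longrightarrow>
       \<exists>w \<in> H u \<inter> H v. \<exists>p. is_shortest_path ?V hypercube_E p u v \<and> w \<in> set p"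
    using assms(1) unfolding is_hierarchical_hub_labeling_def is_hub_labeling_def by blast
  have sub: "subcube P \<subseteq> ?V" using subcube_subset_hypercube_V[OF assms(2)] .
  obtain m where m: "m \<in> subcube P" and top: "\<And>x. x \<in> subcube P \<Longrightarrow> r x \<le> r m"
    using ex_max_rank[OF finite_subset[OF sub finite_hypercube_V] subcube_nonempty] by metis
  define v where "v = subcube_antipode P m"
  have "length v = length m"
    using m by (auto simp: v_def subcube_antipode_def subcube_def dest: list_all2_lengthD)
  then have pattern: "spanning_pattern v m = P"
    using m by (simp add: spanning_pattern_eq_iff v_def)
  have mV: "m \<in> ?V" and vV: "v \<in> ?V"
    using m sub \<open>length v = length m\<close> by (auto simp: hypercube_V_def)
  obtain w p where w: "w \<in> H v" "w \<in> H m"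
    and p: "is_shortest_path ?V hypercube_E p v m" "w \<in> set p"
    using cover[OF vV mV] by blast
  have "w \<in> subcube P"
    using shortest_path_subset_subcube[OF p(1)] p(2) pattern by blast
  then have "r w \<le> r m" "w \<in> ?V" using top sub by auto
  moreover have "r m \<le> r w" using r(2)[OF mV w(2)] .
  ultimately have "w = m" using inj_onD[OF r(1) _ _ mV] by simp
  with w(1) vV have "(v, m) \<in> Sigma ?V H" by simp
  with pattern show ?thesis by (auto intro: image_eqI[of _ _ "(v, m)"])
qed

lemma hierarchical_hub_labeling_hypercube_size_ge:
  assumes "is_hierarchical_hub_labeling (hypercube_V d) hypercube_E H"
  shows "3 ^ d \<le> labeling_size (hypercube_V d) H"
proof -
  let ?V = "hypercube_V d"
  have hubs: "\<forall>v\<in>?V. H v \<subseteq> ?V"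
    using assms unfolding is_hierarchical_hub_labeling_def is_hub_labeling_def by blast
  have fin: "finite (Sigma ?V H)"
    using finite_hypercube_V[of d] hubs by (intro finite_SigmaI) (auto intro: finite_subset)
  have "{P. length P = d} \<subseteq> (\<lambda>(v, w). spanning_pattern v w) ` Sigma ?V H"
    using hierarchical_hub_labeling_realizes_pattern[OF assms] by blast
  then have "card {P :: bool option list. length P = d} \<le> card (Sigma ?V H)"
    using card_mono[OF finite_imageI[OF fin]] card_image_le[OF fin] order_trans by blast
  then show ?thesis
    by (simp add: card_patterns labeling_size_eq_card_Sigma[OF finite_hypercube_V hubs])
qed

definition top_hub_labeling :: "(bool list \<Rightarrow> nat) \<Rightarrow> nat \<Rightarrow> bool list \<Rightarrow> bool list set" where
  "top_hub_labeling r d v =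
     {w \<in> hypercube_V d. \<forall>x \<in> subcube (spanning_pattern v w). r x \<le> r w}"

lemma top_hub_labeling_hierarchical:
  assumes "inj_on r (hypercube_V d)"
  shows "is_hierarchical_hub_labeling (hypercube_V d) hypercube_E (top_hub_labeling r d)"
proof -
  let ?V = "hypercube_V d" and ?H = "top_hub_labeling r d"
  have cover: "\<exists>w \<in> ?H u \<inter> ?H v. \<exists>p. is_shortest_path ?V hypercube_E p u v \<and> w \<in> set p"
    if uv: "u \<in> ?V" "v \<in> ?V" for u v
  proof -
    let ?C = "subcube (spanning_pattern u v)"
    have "?C \<subseteq> ?V" using uv by (auto simp: mem_subcube_spanning_pattern)
    then have "finite ?C" using finite_hypercube_V by (rule finite_subset)
    moreover have "u \<in> ?C" using uv by (simp add: mem_subcube_spanning_pattern)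
    ultimately obtain w where w: "w \<in> ?C" and top: "\<And>x. x \<in> ?C \<Longrightarrow> r x \<le> r w"
      using ex_max_rank[of ?C r] by blast
    have wV: "w \<in> ?V" using w uv by (simp add: mem_subcube_spanning_pattern)
    have "w \<in> ?H u"
      using subcube_spanning_pattern_mono[OF uv w] top wV by (auto simp: top_hub_labeling_def)
    moreover have "w \<in> ?H v"
      using subcube_spanning_pattern_mono[OF uv(2,1)] w top wV
      by (auto simp: top_hub_labeling_def spanning_pattern_commute[of v])
    moreover obtain p where "is_shortest_path ?V hypercube_E p u v" "w \<in> set p"
      using ex_shortest_path_through[OF uv w] by blast
    ultimately show ?thesis by blast
  qed
  have "r v \<le> r w" if "v \<in> ?V" "w \<in> ?H v" for v w
    using that by (auto simp: top_hub_labeling_def mem_subcube_spanning_pattern)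
  with cover assms show ?thesis
    unfolding is_hierarchical_hub_labeling_def is_hub_labeling_def
    by (auto simp: top_hub_labeling_def)
qed

lemma top_hub_labeling_size_le:
  assumes "inj_on r (hypercube_V d)"
  shows "labeling_size (hypercube_V d) (top_hub_labeling r d) \<le> 3 ^ d"
proof -
  let ?V = "hypercube_V d" and ?H = "top_hub_labeling r d"
  have hubs: "\<forall>v\<in>?V. ?H v \<subseteq> ?V" by (auto simp: top_hub_labeling_def)
  have "inj_on (\<lambda>(v, w). spanning_pattern v w) (Sigma ?V ?H)"
  proof (rule inj_onI, clarsimp)
    fix v w v' w'
    assume vw: "v \<in> ?V" "w \<in> ?H v" "v' \<in> ?V" "w' \<in> ?H v'"
      and eq: "spanning_pattern v w = spanning_pattern v' w'"
    let ?P = "spanning_pattern v w"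
    have lengths: "length v = length w" "length v' = length w'"
      using vw by (auto simp: top_hub_labeling_def hypercube_V_def)
    have w: "w \<in> subcube ?P" "v = subcube_antipode ?P w"
      using spanning_pattern_eq_iff[OF lengths(1), of ?P] by simp_all
    have w': "w' \<in> subcube ?P" "v' = subcube_antipode ?P w'"
      using spanning_pattern_eq_iff[OF lengths(2), of ?P] eq by simp_all
    have "r w' \<le> r w" "r w \<le> r w'"
      using vw w'(1) w(1) eq by (auto simp: top_hub_labeling_def)
    moreover have "w \<in> ?V" "w' \<in> ?V" using vw by (simp_all add: top_hub_labeling_def)
    ultimately show "v = v' \<and> w = w'" using inj_onD[OF assms, of w w'] w w' by simp
  qed
  moreover have "(\<lambda>(v, w). spanning_pattern v w) ` Sigma ?V ?H \<subseteq> {P. length P = d}"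
    by (auto simp: spanning_pattern_def hypercube_V_def top_hub_labeling_def)
  moreover have "finite {P :: bool option list. length P = d}"
    using finite_lists_length_eq[of "UNIV :: bool option set" d] by simp
  ultimately have "card (Sigma ?V ?H) \<le> card {P :: bool option list. length P = d}"
    by (rule card_inj_on_le)
  then show ?thesis
    by (simp add: card_patterns labeling_size_eq_card_Sigma[OF finite_hypercube_V hubs])
qed

theorem mainTheorem3:
  fixes d :: nat
  assumes "d \<ge> 1"
  shows "(\<forall>H. is_hierarchical_hub_labeling (hypercube_V d) hypercube_E H \<longrightarrow>
            labeling_size (hypercube_V d) H \<ge> 3 ^ d)
       \<and> Min {labeling_size (hypercube_V d) H | H.
               is_hierarchical_hub_labeling (hypercube_V d) hypercube_E H} = 3 ^ d"
proof -
  let ?sizes = "{labeling_size (hypercube_V d) H | H.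
                  is_hierarchical_hub_labeling (hypercube_V d) hypercube_E H}"
  have lower: "\<forall>H. is_hierarchical_hub_labeling (hypercube_V d) hypercube_E H \<longrightarrow>
                  labeling_size (hypercube_V d) H \<ge> 3 ^ d"
    using hierarchical_hub_labeling_hypercube_size_ge by blast
  obtain r :: "bool list \<Rightarrow> nat" where r: "inj_on r (hypercube_V d)"
    using finite_imp_inj_to_nat_seg[OF finite_hypercube_V] by blast
  note hier = top_hub_labeling_hierarchical[OF r]
  have "labeling_size (hypercube_V d) (top_hub_labeling r d) = 3 ^ d"
    using top_hub_labeling_size_le[OF r] lower[rule_format, OF hier] by simp
  then have attained: "3 ^ d \<in> ?sizes" using hier by (metis (mono_tags, lifting) mem_Collect_eq)
  have "?sizes \<subseteq> {labeling_size (hypercube_V d) H | H. is_hub_labeling (hypercube_V d) hypercube_E H}"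
    unfolding is_hierarchical_hub_labeling_def by blast
  then have "finite ?sizes"
    using finite_hub_labeling_sizes[OF finite_hypercube_V] by (rule finite_subset)
  then have "Min ?sizes = 3 ^ d"
  proof (rule Min_eqI)
    show "3 ^ d \<le> s" if "s \<in> ?sizes" for s
      using that lower by auto
  qed (rule attained)
  with lower show ?thesis ..
qed

end
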